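(* For all integers $n,k$ with $n\ge 4$ and $1\le k<n$, the Johnson graph $J(n,k)$ is paired 2-coverable.
   Context: Let $[n]=\{1,2,\dots,n\}$. The Johnson graph $J(n,k)$ ($0\le k\le n$) has as vertices the $k$-element subsets of $[n]$, two vertices being adjacent if and only if the corresponding subsets have exactly $k-1$ elements in common. A graph $G$ is \emph{paired 2-coverable} if for any four distinct vertices $u,v,x,y$ of $G$ there exist two vertex-disjoint paths $P$ and $Q$ in $G$ such that $P$ has endpoints $u$ and $v$, $Q$ has endpoints $x$ and $y$, and $V(P)\cup V(Q)=V(G)$. *)

theory Defs
  imports Main
begin

definition johnson_vertices :: "nat \<Rightarrow> nat \<Rightarrow> nat set set" where
  "johnson_vertices n k = {A. A \<subseteq> {1..n} \<and> card A = k}"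

text \<open>Two k-subsets are adjacent iff they have exactly k-1 common elements
  (written as card + 1 = k to avoid truncated subtraction).\<close>
definition johnson_adj :: "nat \<Rightarrow> nat set \<Rightarrow> nat set \<Rightarrow> bool" where
  "johnson_adj k A B \<longleftrightarrow> card (A \<inter> B) + 1 = k"

definition is_path :: "'a set \<Rightarrow> ('a \<Rightarrow> 'a \<Rightarrow> bool) \<Rightarrow> 'a list \<Rightarrow> 'a \<Rightarrow> 'a \<Rightarrow> bool" where
  "is_path V E p u v \<longleftrightarrow> p \<noteq> [] \<and> distinct p \<and> set p \<subseteq> V \<and>
     hd p = u \<and> last p = v \<and> (\<forall>i. Suc i < length p \<longrightarrow> E (p ! i) (p ! Suc i))"

definition paired_2_coverable :: "'a set \<Rightarrow> ('a \<Rightarrow> 'a \<Rightarrow> bool) \<Rightarrow> bool" where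
  "paired_2_coverable V E \<longleftrightarrow>
     (\<forall>u v x y. u \<in> V \<and> v \<in> V \<and> x \<in> V \<and> y \<in> V \<and> distinct [u, v, x, y] \<longrightarrow>
        (\<exists>P Q. is_path V E P u v \<and> is_path V E Q x y \<and> set P \<inter> set Q = {} \<and>
               set P \<union> set Q = V))"

end

theory Submission
  imports Defs "HOL.Binomial_Plus"
begin

(* The K-subsets of T containing F span a copy of J(|T - F|, K - |F|), and the theorem is proved for
   all these generalised Johnson graphs by induction on |T - F|.  The base cases are the complete
   graphs (K = |F| + 1 or K = |T| - 1) and the octahedron J(4,2).  Otherwise an element e of T - F
   splits the graph into the sets avoiding e and the sets containing e: two smaller Johnson graphs,
   which are Hamiltonian-connected and, by induction, paired 2-coverable, joined by the exchange
   edges A ~ A - s + z.  Depending on where the four terminals lie, the two paths are glued from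
   covers and Hamiltonian paths of the halves.  If e separates both u from v and x from y, each path
   must cross between the halves, which needs two disjoint exchange edges avoiding the terminals;
   these exist once |T - F| >= 6.  And e can be chosen not to separate both pairs unless u and v are
   complementary in T - F, which forces |T - F| = 2 (K - |F|) to be even. *)

definition paired_cover :: "'a set \<Rightarrow> ('a \<Rightarrow> 'a \<Rightarrow> bool) \<Rightarrow> 'a \<Rightarrow> 'a \<Rightarrow> 'a \<Rightarrow> 'a \<Rightarrow> bool" where
  "paired_cover V E u v x y \<longleftrightarrow>
     (\<exists>P Q. is_path V E P u v \<and> is_path V E Q x y \<and> set P \<inter> set Q = {} \<and> set P \<union> set Q = V)"

definition hamiltonian_connected :: "'a set \<Rightarrow> ('a \<Rightarrow> 'a \<Rightarrow> bool) \<Rightarrow> bool" where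
  "hamiltonian_connected V E \<longleftrightarrow> (\<forall>u\<in>V. \<forall>v\<in>V. u \<noteq> v \<longrightarrow> (\<exists>P. is_path V E P u v \<and> set P = V))"

lemma paired_2_coverableI:
  assumes "\<And>u v x y. u \<in> V \<Longrightarrow> v \<in> V \<Longrightarrow> x \<in> V \<Longrightarrow> y \<in> V \<Longrightarrow> distinct [u, v, x, y] \<Longrightarrow>
    paired_cover V E u v x y"
  shows "paired_2_coverable V E"
  using assms unfolding paired_2_coverable_def paired_cover_def by blast

lemma paired_2_coverableD:
  assumes "paired_2_coverable V E" "u \<in> V" "v \<in> V" "x \<in> V" "y \<in> V" "distinct [u, v, x, y]"
  obtains P Q where "is_path V E P u v" "is_path V E Q x y" "set P \<inter> set Q = {}" "set P \<union> set Q = V"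
  using assms unfolding paired_2_coverable_def by blast

lemma hamiltonian_connectedD:
  assumes "hamiltonian_connected V E" "u \<in> V" "v \<in> V" "u \<noteq> v"
  obtains P where "is_path V E P u v" "set P = V"
  using assms unfolding hamiltonian_connected_def by blast

lemma is_path_iff_successively:
  "is_path V E p u v \<longleftrightarrow>
     p \<noteq> [] \<and> distinct p \<and> set p \<subseteq> V \<and> hd p = u \<and> last p = v \<and> successively E p"
  by (simp add: is_path_def successively_conv_nth)

lemma is_path_subset: "is_path V E p u v \<Longrightarrow> set p \<subseteq> V"
  by (simp add: is_path_def)

lemma is_path_mono: "is_path V E p u v \<Longrightarrow> V \<subseteq> W \<Longrightarrow> is_path W E p u v"
  by (auto simp: is_path_iff_successively)

lemma is_path_rev: "symp E \<Longrightarrow> is_path V E p u v \<Longrightarrow> is_path V E (rev p) v u"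
  by (auto simp: is_path_iff_successively hd_rev last_rev intro: successively_mono sympD)

lemma is_path_append:
  assumes "is_path V E P u a" "is_path V E Q b v" "set P \<inter> set Q = {}" "E a b"
  shows "is_path V E (P @ Q) u v"
  using assms by (auto simp: is_path_iff_successively successively_append_iff)

lemma is_path_append_disjoint:
  assumes "is_path W E P u a" "is_path V E Q b v" "V \<inter> W = {}" "E a b"
  shows "is_path (V \<union> W) E (P @ Q) u v"
  using assms is_path_subset[OF assms(1)] is_path_subset[OF assms(2)]
  by (intro is_path_append[OF is_path_mono[OF assms(1)] is_path_mono[OF assms(2)]]) auto

lemma is_path_detour:
  assumes "is_path V E (u # P) u v" "P \<noteq> []" "is_path V E H a b" "set H \<inter> set (u # P) = {}"
    "E u a" "E b (hd P)"
  shows "is_path V E (u # H @ P) u v"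
  using assms by (auto simp: is_path_iff_successively successively_append_iff successively_Cons)

lemma paired_cover_of_lists:
  assumes "distinct (P @ Q)" "set (P @ Q) = V" "P \<noteq> []" "Q \<noteq> []" "successively E P" "successively E Q"
  shows "paired_cover V E (hd P) (last P) (hd Q) (last Q)"
  unfolding paired_cover_def using assms
  by (intro exI[of _ P] exI[of _ Q]) (auto simp: is_path_iff_successively)

lemma paired_cover_swap: "paired_cover V E u v x y \<Longrightarrow> paired_cover V E x y u v"
  unfolding paired_cover_def by blast

lemma paired_cover_rev_first: "symp E \<Longrightarrow> paired_cover V E u v x y \<Longrightarrow> paired_cover V E v u x y"
  unfolding paired_cover_def by (metis is_path_rev set_rev)

lemma paired_cover_rev_second: "symp E \<Longrightarrow> paired_cover V E u v x y \<Longrightarrow> paired_cover V E u v y x"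
  unfolding paired_cover_def by (metis is_path_rev set_rev)

lemma obtain_outside:
  assumes "finite B" "card B < card X"
  obtains a where "a \<in> X" "a \<notin> B"
  using assms by (meson card_mono subsetI leD)

lemma obtain_two_outside:
  assumes "finite B" "card B + 2 \<le> card X"
  obtains a b where "a \<in> X" "b \<in> X" "a \<noteq> b" "a \<notin> B" "b \<notin> B"
proof -
  obtain a where a: "a \<in> X" "a \<notin> B"
    using obtain_outside[OF assms(1), of X] assms(2) by auto
  moreover obtain b where "b \<in> X" "b \<notin> insert a B"
    using obtain_outside[of "insert a B" X] assms a by (auto simp: card_insert_if)
  ultimately show thesis
    using that by blast
qed

lemma successively_complete:
  "distinct p \<Longrightarrow> set p \<subseteq> V \<Longrightarrow> (\<And>a b. a \<in> V \<Longrightarrow> b \<in> V \<Longrightarrow> a \<noteq> b \<Longrightarrow> E a b) \<Longrightarrow> successively E p"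
  by (induction p rule: induct_list012) auto

lemma hamiltonian_connected_complete:
  assumes "finite V" and complete: "\<And>a b. a \<in> V \<Longrightarrow> b \<in> V \<Longrightarrow> a \<noteq> b \<Longrightarrow> E a b"
  shows "hamiltonian_connected V E"
  unfolding hamiltonian_connected_def
proof (intro ballI impI)
  fix u v assume uv: "u \<in> V" "v \<in> V" "u \<noteq> v"
  obtain L where L: "set L = V - {u, v}" "distinct L"
    using finite_distinct_list[of "V - {u, v}"] assms(1) by auto
  have "successively E (u # L @ [v])"
    using L uv by (intro successively_complete[where V = V] complete) auto
  then have "is_path V E (u # L @ [v]) u v"
    using L uv by (auto simp: is_path_iff_successively)
  moreover have "set (u # L @ [v]) = V"
    using L uv by auto
  ultimately show "\<exists>P. is_path V E P u v \<and> set P = V"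
    by blast
qed

lemma paired_2_coverable_complete:
  assumes "finite V" and complete: "\<And>a b. a \<in> V \<Longrightarrow> b \<in> V \<Longrightarrow> a \<noteq> b \<Longrightarrow> E a b"
  shows "paired_2_coverable V E"
proof (rule paired_2_coverableI)
  fix u v x y assume "u \<in> V" "v \<in> V" "x \<in> V" "y \<in> V" "distinct [u, v, x, y]"
  moreover obtain L where "set L = V - {u, v, x, y}" "distinct L"
    using finite_distinct_list[of "V - {u, v, x, y}"] assms(1) by auto
  moreover have "successively E P" if "distinct P" "set P \<subseteq> V" for P
    using that by (intro successively_complete[where V = V] complete)
  ultimately show "paired_cover V E u v x y"
    using paired_cover_of_lists[of "u # L @ [v]" "[x, y]" V E] complete[of x y] by auto
qed

lemma is_path_cong:
  assumes "\<And>a b. a \<in> V \<Longrightarrow> b \<in> V \<Longrightarrow> E a b = E' a b"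
  shows "is_path V E p u v = is_path V E' p u v"
proof -
  have "successively E p = successively E' p" if "set p \<subseteq> V"
    using that assms by (intro successively_cong) auto
  then show ?thesis
    by (auto simp: is_path_iff_successively)
qed

lemma paired_cover_cong:
  assumes "\<And>a b. a \<in> V \<Longrightarrow> b \<in> V \<Longrightarrow> E a b = E' a b"
  shows "paired_cover V E u v x y = paired_cover V E' u v x y"
proof -
  have "is_path V E p a b = is_path V E' p a b" for p a b
    using assms by (rule is_path_cong)
  then show ?thesis
    unfolding paired_cover_def by simp
qed

lemma octahedron_path_through:
  assumes "distinct [a, b, w1, w2]" "\<sigma> w1 \<noteq> w2"
    and "\<sigma> (\<sigma> a) = a" "\<sigma> (\<sigma> b) = b" "\<sigma> (\<sigma> w1) = w1" "\<sigma> (\<sigma> w2) = w2"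
  defines "E \<equiv> \<lambda>p q. p \<noteq> q \<and> q \<noteq> \<sigma> p"
  shows "successively E [a, w1, w2, b] \<or> successively E [a, w2, w1, b]"
  using assms by auto

(* If the two non-terminals w1, w2 are antipodal, one goes into each path; otherwise both go into one
   path, and the other path is a single edge, which is available for at least one of the pairs. *)
lemma octahedron_paired_cover:
  assumes d: "distinct [u, v, x, y, w1, w2]"
    and involution: "\<And>a. a \<in> {u, v, x, y, w1, w2} \<Longrightarrow>
      \<sigma> a \<in> {u, v, x, y, w1, w2} \<and> \<sigma> (\<sigma> a) = a \<and> \<sigma> a \<noteq> a"
  defines "E \<equiv> \<lambda>p q. p \<noteq> q \<and> q \<noteq> \<sigma> p"
  shows "paired_cover {u, v, x, y, w1, w2} E u v x y"
proof -
  let ?V = "{u, v, x, y, w1, w2}"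
  have inv: "\<sigma> (\<sigma> u) = u" "\<sigma> (\<sigma> v) = v" "\<sigma> (\<sigma> x) = x" "\<sigma> (\<sigma> y) = y"
    "\<sigma> (\<sigma> w1) = w1" "\<sigma> (\<sigma> w2) = w2"
    using involution by auto
  have edge_and_detour: "paired_cover ?V E a b c d"
    if "distinct [a, b, c, d, w1, w2]" "?V = {a, b, c, d, w1, w2}" "\<sigma> a \<noteq> b" "\<sigma> w1 \<noteq> w2"
      "\<sigma> (\<sigma> c) = c" "\<sigma> (\<sigma> d) = d" for a b c d
  proof -
    from octahedron_path_through[of c d w1 w2 \<sigma>] that(1,4-6) inv(5,6)
    consider "successively E [c, w1, w2, d]" | "successively E [c, w2, w1, d]"
      unfolding E_def by auto
    then show ?thesis
    proof cases
      case 1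
      have "paired_cover ?V E (hd [a, b]) (last [a, b]) (hd [c, w1, w2, d]) (last [c, w1, w2, d])"
        by (rule paired_cover_of_lists) (use 1 that(1-3) in \<open>auto simp: E_def\<close>)
      then show ?thesis
        by simp
    next
      case 2
      have "paired_cover ?V E (hd [a, b]) (last [a, b]) (hd [c, w2, w1, d]) (last [c, w2, w1, d])"
        by (rule paired_cover_of_lists) (use 2 that(1-3) in \<open>auto simp: E_def\<close>)
      then show ?thesis
        by simp
    qed
  qed
  show ?thesis
  proof (cases "\<sigma> w1 = w2")
    case True
    have "paired_cover ?V E (hd [u, w1, v]) (last [u, w1, v]) (hd [x, w2, y]) (last [x, w2, y])"
      by (rule paired_cover_of_lists) (use d inv True in \<open>auto simp: E_def\<close>)
    then show ?thesis
      by simp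
  next
    case False
    show ?thesis
    proof (cases "\<sigma> u = v")
      case False
      with \<open>\<sigma> w1 \<noteq> w2\<close> show ?thesis
        using edge_and_detour[of u v x y] d inv by simp
    next
      case True
      have "\<sigma> w1 \<in> {u, v, x, y, w2}"
        using involution[of w1] by auto
      with True \<open>\<sigma> w1 \<noteq> w2\<close> have "\<sigma> x \<noteq> y"
        using inv d by auto
      moreover have "?V = {x, y, u, v, w1, w2}" "distinct [x, y, u, v, w1, w2]"
        using d by auto
      ultimately show ?thesis
        using edge_and_detour[of x y u v] \<open>\<sigma> w1 \<noteq> w2\<close> inv paired_cover_swap by metis
    qed
  qed
qed

lemma paired_2_coverable_octahedron:
  assumes "card V = 6"
    and involution: "\<And>a. a \<in> V \<Longrightarrow> \<sigma> a \<in> V \<and> \<sigma> (\<sigma> a) = a \<and> \<sigma> a \<noteq> a"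
    and adjacency: "\<And>a b. a \<in> V \<Longrightarrow> b \<in> V \<Longrightarrow> E a b \<longleftrightarrow> a \<noteq> b \<and> b \<noteq> \<sigma> a"
  shows "paired_2_coverable V E"
proof (rule paired_2_coverableI)
  fix u v x y assume uvxy: "u \<in> V" "v \<in> V" "x \<in> V" "y \<in> V" "distinct [u, v, x, y]"
  then have "card (V - {u, v, x, y}) = 2"
    using assms(1) by (simp add: card_Diff_subset)
  then obtain w1 w2 where w: "V - {u, v, x, y} = {w1, w2}" "w1 \<noteq> w2"
    by (meson card_2_iff)
  have V: "V = {u, v, x, y, w1, w2}" and d: "distinct [u, v, x, y, w1, w2]"
    using w uvxy by auto
  have "paired_cover V (\<lambda>p q. p \<noteq> q \<and> q \<noteq> \<sigma> p) u v x y"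
    using octahedron_paired_cover[OF d, of \<sigma>] involution unfolding V by blast
  moreover have "paired_cover V E u v x y = paired_cover V (\<lambda>p q. p \<noteq> q \<and> q \<noteq> \<sigma> p) u v x y"
    by (rule paired_cover_cong) (rule adjacency)
  ultimately show "paired_cover V E u v x y"
    by simp
qed

lemma hamiltonian_path_across:
  assumes "hamiltonian_connected V0 E" "hamiltonian_connected V1 E" "V0 \<inter> V1 = {}"
    and "u \<in> V1" "a \<in> V1" "u \<noteq> a" "E a b" "b \<in> V0" "v \<in> V0" "b \<noteq> v"
  shows "\<exists>P. is_path (V0 \<union> V1) E P u v \<and> set P = V0 \<union> V1"
proof -
  obtain P1 where P1: "is_path V1 E P1 u a" "set P1 = V1"
    using hamiltonian_connectedD[OF assms(2,4,5,6)] .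
  obtain P0 where P0: "is_path V0 E P0 b v" "set P0 = V0"
    using hamiltonian_connectedD[OF assms(1,8,9,10)] .
  show ?thesis
    using is_path_append_disjoint[OF P1(1) P0(1) assms(3,7)] P0(2) P1(2) by auto
qed

(* The assumptions are symmetric in V0
   and V1, so by split_graph_swap every lemma below also holds with the halves exchanged. *)
locale split_graph =
  fixes E :: "'a \<Rightarrow> 'a \<Rightarrow> bool" and V0 V1 :: "'a set"
  assumes sym: "symp E"
    and disjoint: "V0 \<inter> V1 = {}"
    and hamiltonian0: "hamiltonian_connected V0 E" and hamiltonian1: "hamiltonian_connected V1 E"
    and coverable0: "paired_2_coverable V0 E" and coverable1: "paired_2_coverable V1 E"
    and card0: "4 \<le> card V0" and card1: "4 \<le> card V1"
    and two_neighbours0: "\<And>a. a \<in> V0 \<Longrightarrow> \<exists>b b'. b \<in> V1 \<and> b' \<in> V1 \<and> b \<noteq> b' \<and> E a b \<and> E a b'"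
    and two_neighbours1: "\<And>a. a \<in> V1 \<Longrightarrow> \<exists>b b'. b \<in> V0 \<and> b' \<in> V0 \<and> b \<noteq> b' \<and> E a b \<and> E a b'"
    and edge_lift0: "\<And>p p'. p \<in> V0 \<Longrightarrow> p' \<in> V0 \<Longrightarrow> E p p' \<Longrightarrow>
      \<exists>a a'. a \<in> V1 \<and> a' \<in> V1 \<and> a \<noteq> a' \<and> E p a \<and> E a' p'"
    and edge_lift1: "\<And>p p'. p \<in> V1 \<Longrightarrow> p' \<in> V1 \<Longrightarrow> E p p' \<Longrightarrow>
      \<exists>a a'. a \<in> V0 \<and> a' \<in> V0 \<and> a \<noteq> a' \<and> E p a \<and> E a' p'"

lemma split_graph_swap: "split_graph E V0 V1 \<Longrightarrow> split_graph E V1 V0"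
  unfolding split_graph_def by blast

context split_graph
begin

lemma paired_cover_one_vs_three:
  assumes "u \<in> V1" "v \<in> V0" "x \<in> V0" "y \<in> V0" "distinct [u, v, x, y]"
  shows "paired_cover (V0 \<union> V1) E u v x y"
proof -
  have "card {v, x, y} < card V0"
    using card0 card_length[of "[v, x, y]"] by simp
  then obtain b where b: "b \<in> V0" "b \<notin> {v, x, y}"
    using obtain_outside[of "{v, x, y}" V0] by blast
  obtain a where a: "a \<in> V1" "u \<noteq> a" "E a b"
    using two_neighbours0[OF b(1)] sym by (metis sympD)
  obtain H where H: "is_path V1 E H u a" "set H = V1"
    using hamiltonian_connectedD[OF hamiltonian1 assms(1) a(1,2)] .
  have "distinct [b, v, x, y]"
    using b assms(5) by auto
  then obtain P Q where PQ: "is_path V0 E P b v" "is_path V0 E Q x y"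
    "set P \<inter> set Q = {}" "set P \<union> set Q = V0"
    using paired_2_coverableD[OF coverable0 b(1) assms(2-4)] by blast
  have "is_path (V0 \<union> V1) E (H @ P) u v"
    using is_path_append_disjoint[OF H(1) PQ(1) disjoint a(3)] .
  moreover have "is_path (V0 \<union> V1) E Q x y"
    using PQ(2) by (rule is_path_mono) simp
  moreover have "set (H @ P) \<inter> set Q = {}" "set (H @ P) \<union> set Q = V0 \<union> V1"
    using H PQ disjoint is_path_subset[OF PQ(2)] by auto
  ultimately show ?thesis
    unfolding paired_cover_def by blast
qed

lemma paired_cover_pairs_apart:
  assumes "u \<in> V1" "v \<in> V1" "x \<in> V0" "y \<in> V0" "distinct [u, v, x, y]"
  shows "paired_cover (V0 \<union> V1) E u v x y"
proof -
  obtain P where P: "is_path V1 E P u v" "set P = V1"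
    using hamiltonian_connectedD[OF hamiltonian1 assms(1,2)] assms(5) by auto
  obtain Q where Q: "is_path V0 E Q x y" "set Q = V0"
    using hamiltonian_connectedD[OF hamiltonian0 assms(3,4)] assms(5) by auto
  have "is_path (V0 \<union> V1) E P u v" "is_path (V0 \<union> V1) E Q x y"
    using is_path_mono[OF P(1)] is_path_mono[OF Q(1)] by auto
  then show ?thesis
    unfolding paired_cover_def using P(2) Q(2) disjoint by blast
qed

(* The V0-cover of u v x y is kept, and the first edge of the u-v path is replaced by a detour
   through a Hamiltonian path of V1. *)
lemma paired_cover_inside_part:
  assumes "u \<in> V0" "v \<in> V0" "x \<in> V0" "y \<in> V0" "distinct [u, v, x, y]"
  shows "paired_cover (V0 \<union> V1) E u v x y"
proof -
  obtain P Q where PQ: "is_path V0 E P u v" "is_path V0 E Q x y"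
    "set P \<inter> set Q = {}" "set P \<union> set Q = V0"
    using paired_2_coverableD[OF coverable0 assms] .
  have "P \<noteq> []" "hd P = u" "last P = v"
    using PQ(1) by (auto simp: is_path_iff_successively)
  then obtain P' where P': "P = u # P'" "P' \<noteq> []"
    using assms(5) by (cases P) (auto split: if_splits)
  have "E u (hd P')" "hd P' \<in> V0"
    using PQ(1) P' by (auto simp: is_path_iff_successively successively_Cons)
  then obtain a a' where aa: "a \<in> V1" "a' \<in> V1" "a \<noteq> a'" "E u a" "E a' (hd P')"
    using edge_lift0 assms(1) by blast
  obtain H where H: "is_path V1 E H a a'" "set H = V1"
    using hamiltonian_connectedD[OF hamiltonian1 aa(1-3)] .
  have "set H \<inter> set (u # P') = {}"
    using H(2) P'(1) disjoint is_path_subset[OF PQ(1)] by auto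
  then have "is_path (V0 \<union> V1) E (u # H @ P') u v"
    using is_path_detour[OF is_path_mono[OF PQ(1)[unfolded P'(1)]] P'(2) is_path_mono[OF H(1)] _ aa(4,5)]
    by blast
  moreover have "is_path (V0 \<union> V1) E Q x y"
    using PQ(2) by (rule is_path_mono) simp
  moreover have "set (u # H @ P') \<inter> set Q = {}" "set (u # H @ P') \<union> set Q = V0 \<union> V1"
    using H PQ P' disjoint is_path_subset[OF PQ(2)] by auto
  ultimately show ?thesis
    unfolding paired_cover_def by blast
qed

lemma paired_cover_crossing:
  assumes "u \<in> V1" "v \<in> V0" "x \<in> V1" "y \<in> V0" "u \<noteq> x" "v \<noteq> y"
    and "a \<in> V1 - {u, x}" "a' \<in> V1 - {u, x}" "a \<noteq> a'" "E a b"
    and "b \<in> V0 - {v, y}" "b' \<in> V0 - {v, y}" "b \<noteq> b'" "E a' b'"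
  shows "paired_cover (V0 \<union> V1) E u v x y"
proof -
  have "distinct [u, a, x, a']" "distinct [b, v, b', y]"
    using assms(5-9,11-13) by auto
  obtain P1 Q1 where PQ1: "is_path V1 E P1 u a" "is_path V1 E Q1 x a'"
    "set P1 \<inter> set Q1 = {}" "set P1 \<union> set Q1 = V1"
    using paired_2_coverableD[OF coverable1 assms(1) _ assms(3) _ \<open>distinct [u, a, x, a']\<close>] assms(7,8)
    by blast
  obtain P0 Q0 where PQ0: "is_path V0 E P0 b v" "is_path V0 E Q0 b' y"
    "set P0 \<inter> set Q0 = {}" "set P0 \<union> set Q0 = V0"
    using paired_2_coverableD[OF coverable0 _ assms(2) _ assms(4) \<open>distinct [b, v, b', y]\<close>] assms(11,12)
    by blast
  have "is_path (V0 \<union> V1) E (P1 @ P0) u v" "is_path (V0 \<union> V1) E (Q1 @ Q0) x y"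
    using is_path_append_disjoint[OF PQ1(1) PQ0(1) disjoint assms(10)]
      is_path_append_disjoint[OF PQ1(2) PQ0(2) disjoint assms(14)] .
  moreover have "set (P1 @ P0) \<inter> set (Q1 @ Q0) = {}" "set (P1 @ P0) \<union> set (Q1 @ Q0) = V0 \<union> V1"
    using PQ1(3,4) PQ0(3,4) disjoint is_path_subset[OF PQ1(1)] is_path_subset[OF PQ1(2)]
      is_path_subset[OF PQ0(1)] is_path_subset[OF PQ0(2)]
    by auto
  ultimately show ?thesis
    unfolding paired_cover_def by blast
qed

(* Up to reversing the u-v path and exchanging the halves, this leaves three configurations: all
   four terminals in one half, three against one, or pair against pair. *)
lemma paired_cover_second_pair_unsplit:
  assumes "u \<in> V0 \<union> V1" "v \<in> V0 \<union> V1" "distinct [u, v, x, y]"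
    and "x \<in> V0 \<and> y \<in> V0 \<or> x \<in> V1 \<and> y \<in> V1"
  shows "paired_cover (V0 \<union> V1) E u v x y"
proof -
  interpret mirror: split_graph E V1 V0
    using split_graph_axioms by (rule split_graph_swap)
  have uv: "u \<in> V0 \<longleftrightarrow> u \<notin> V1" "v \<in> V0 \<longleftrightarrow> v \<notin> V1"
    using assms(1,2) disjoint by auto
  have "distinct [v, u, x, y]"
    using assms(3) by auto
  note rev = paired_cover_rev_first[OF sym]
  from assms(4) show ?thesis
  proof
    assume "x \<in> V0 \<and> y \<in> V0"
    then show ?thesis
      using assms(3) \<open>distinct [v, u, x, y]\<close> uv paired_cover_inside_part[of u v x y]
        paired_cover_one_vs_three[of u v x y] rev[OF paired_cover_one_vs_three[of v u x y]]
        paired_cover_pairs_apart[of u v x y]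
      by (cases "u \<in> V1"; cases "v \<in> V1") simp_all
  next
    assume "x \<in> V1 \<and> y \<in> V1"
    then have "paired_cover (V1 \<union> V0) E u v x y"
      using assms(3) \<open>distinct [v, u, x, y]\<close> uv mirror.paired_cover_inside_part[of u v x y]
        mirror.paired_cover_one_vs_three[of u v x y] rev[OF mirror.paired_cover_one_vs_three[of v u x y]]
        mirror.paired_cover_pairs_apart[of u v x y]
      by (cases "u \<in> V1"; cases "v \<in> V1") simp_all
    then show ?thesis
      by (simp add: Un_commute)
  qed
qed

lemma paired_cover_noncrossing:
  assumes "u \<in> V0 \<union> V1" "v \<in> V0 \<union> V1" "x \<in> V0 \<union> V1" "y \<in> V0 \<union> V1" "distinct [u, v, x, y]"
    and "(u \<in> V1) = (v \<in> V1) \<or> (x \<in> V1) = (y \<in> V1)"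
  shows "paired_cover (V0 \<union> V1) E u v x y"
  using assms(6)
proof
  assume "(u \<in> V1) = (v \<in> V1)"
  then have "paired_cover (V0 \<union> V1) E x y u v"
    using paired_cover_second_pair_unsplit[of x y u v] assms(1-5) by auto
  then show ?thesis
    by (rule paired_cover_swap)
next
  assume "(x \<in> V1) = (y \<in> V1)"
  then show ?thesis
    using paired_cover_second_pair_unsplit[of u v x y] assms(1-5) by auto
qed

end

definition ksets :: "'a set \<Rightarrow> 'a set \<Rightarrow> nat \<Rightarrow> 'a set set" where
  "ksets F T K = {A. F \<subseteq> A \<and> A \<subseteq> T \<and> card A = K}"

lemma mem_ksets: "A \<in> ksets F T K \<longleftrightarrow> F \<subseteq> A \<and> A \<subseteq> T \<and> card A = K"
  by (simp add: ksets_def)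

lemma mem_ksets_insert: "A \<in> ksets (insert e F) T K \<longleftrightarrow> e \<in> A \<and> A \<in> ksets F T K"
  by (auto simp: mem_ksets)

lemma finite_ksets: "finite T \<Longrightarrow> finite (ksets F T K)"
  unfolding ksets_def by (rule finite_subset[of _ "Pow T"]) auto

lemma finite_ksets_member:
  assumes "finite T" "A \<in> ksets F T K"
  shows "finite A" "finite F"
  using assms by (meson finite_subset mem_ksets)+

lemma card_ksets:
  assumes "finite T" "F \<subseteq> T" "card F \<le> K"
  shows "card (ksets F T K) = card (T - F) choose (K - card F)"
proof -
  have "finite F"
    using assms(1,2) finite_subset by blast
  have "bij_betw (\<lambda>A. A - F) (ksets F T K) {B. B \<subseteq> T - F \<and> card B = K - card F}"
  proof (rule bij_betw_byWitness[where f' = "\<lambda>B. B \<union> F"])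
    show "(\<lambda>B. B \<union> F) ` {B. B \<subseteq> T - F \<and> card B = K - card F} \<subseteq> ksets F T K"
    proof safe
      fix B assume "B \<subseteq> T - F" "card B = K - card F"
      moreover have "finite B"
        using \<open>B \<subseteq> T - F\<close> assms(1) finite_subset by blast
      ultimately show "B \<union> F \<in> ksets F T K"
        using assms \<open>finite F\<close> card_Un_disjoint[of B F] by (auto simp: mem_ksets)
    qed
  qed (use \<open>finite F\<close> in \<open>auto simp: mem_ksets card_Diff_subset\<close>)
  then have "card (ksets F T K) = card {B. B \<subseteq> T - F \<and> card B = K - card F}"
    by (rule bij_betw_same_card)
  also have "\<dots> = card (T - F) choose (K - card F)"
    using assms(1) by (intro n_subsets) simp
  finally show ?thesis .
qed

lemma card_ksets_ge:
  assumes "finite T" "F \<subseteq> T" "card F < K" "K < card T"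
  shows "card T - card F \<le> card (ksets F T K)"
proof -
  have "card (T - F) = card T - card F"
    using assms(1,2) by (meson card_Diff_subset finite_subset)
  then show ?thesis
    using card_ksets[OF assms(1,2)] upper_le_binomial[of "K - card F" "card T - card F"] assms(3,4)
    by simp
qed

lemma ksets_split:
  assumes "e \<in> T" "e \<notin> F"
  shows "ksets F T K = ksets F (T - {e}) K \<union> ksets (insert e F) T K"
  using assms by (auto simp: mem_ksets)

lemma ksets_split_disjoint: "ksets F (T - {e}) K \<inter> ksets (insert e F) T K = {}"
  by (auto simp: mem_ksets)

lemma ksets_obtain_separating:
  assumes "finite T" "u \<in> ksets F T K" "v \<in> ksets F T K" "u \<noteq> v"
  obtains e where "e \<in> T" "e \<notin> F" "e \<in> u" "e \<notin> v"
proof -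
  have "\<not> u \<subseteq> v"
    using assms card_subset_eq[of v u] finite_subset by (auto simp: mem_ksets)
  then show thesis
    using that assms(2,3) by (auto simp: mem_ksets)
qed

lemma ksets_separated_card:
  assumes "finite T" "u \<in> ksets F T K" "v \<in> ksets F T K"
    and "\<And>e. e \<in> T \<Longrightarrow> e \<notin> F \<Longrightarrow> (e \<in> u) \<noteq> (e \<in> v)"
  shows "card T - card F = 2 * (K - card F)"
proof -
  have sub: "F \<subseteq> u" "F \<subseteq> v" "F \<subseteq> T" "card u = K" "card v = K"
    using assms(2,3) by (auto simp: mem_ksets)
  have "finite u" "finite v" "finite F"
    using finite_ksets_member[OF assms(1,2)] finite_ksets_member(1)[OF assms(1,3)] by auto
  have "T - F = (u - F) \<union> (v - F)" "(u - F) \<inter> (v - F) = {}"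
    using assms(2-4) by (auto simp: mem_ksets)
  then have "card (T - F) = card (u - F) + card (v - F)"
    using \<open>finite u\<close> \<open>finite v\<close> by (simp add: card_Un_disjoint)
  then show ?thesis
    using sub \<open>finite F\<close> by (simp add: card_Diff_subset)
qed

lemma symp_johnson_adj: "symp (johnson_adj K)"
  by (auto intro: sympI simp: johnson_adj_def Int_commute)

lemma johnson_adj_neq: "johnson_adj (card A) A B \<Longrightarrow> A \<noteq> B"
  by (auto simp: johnson_adj_def)

lemma card_Int_ksets:
  assumes "finite T" "A \<in> ksets F T K" "B \<in> ksets F T K" "A \<noteq> B"
  shows "card F \<le> card (A \<inter> B)" "card (A \<inter> B) < K"
proof -
  have "finite A" "finite B" "F \<subseteq> A \<inter> B"
    using assms(1-3) finite_subset by (auto simp: mem_ksets)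
  then show "card F \<le> card (A \<inter> B)"
    by (intro card_mono) auto
  have "\<not> A \<subseteq> B"
    using assms(2-4) \<open>finite B\<close> card_subset_eq[of B A] by (auto simp: mem_ksets)
  then have "A \<inter> B \<subset> A"
    by blast
  then show "card (A \<inter> B) < K"
    using psubset_card_mono[OF \<open>finite A\<close>] assms(2) by (simp add: mem_ksets)
qed

lemma johnson_adj_ksets_complete:
  assumes "finite T" "K = Suc (card F) \<or> Suc K = card T"
    and "A \<in> ksets F T K" "B \<in> ksets F T K" "A \<noteq> B"
  shows "johnson_adj K A B"
proof -
  have "finite A" "finite B" "card (A \<union> B) \<le> card T"
    using assms(1,3,4) finite_subset by (auto simp: mem_ksets intro: card_mono)
  moreover have "card A + card B = card (A \<union> B) + card (A \<inter> B)"
    using calculation by (intro card_Un_Int)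
  ultimately show ?thesis
    using assms(2-4) card_Int_ksets[OF assms(1,3-5)] by (auto simp: johnson_adj_def mem_ksets)
qed

lemma ksets_complement:
  assumes "finite T" "F \<subseteq> T" "A \<in> ksets F T K"
  shows "(T - A) \<union> F \<in> ksets F T (card T + card F - K)" "A \<inter> ((T - A) \<union> F) = F"
    "(T - ((T - A) \<union> F)) \<union> F = A"
proof -
  have "F \<subseteq> A" "A \<subseteq> T" "card A = K" "finite A" "finite F"
    using assms finite_ksets_member[OF assms(1,3)] by (auto simp: mem_ksets)
  moreover have "card ((T - A) \<union> F) = card (T - A) + card F"
    using calculation assms(1) by (intro card_Un_disjoint) auto
  ultimately show "(T - A) \<union> F \<in> ksets F T (card T + card F - K)"
    using assms(1,2) card_mono[OF assms(1), of A] by (auto simp: mem_ksets card_Diff_subset)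
  show "A \<inter> ((T - A) \<union> F) = F" "(T - ((T - A) \<union> F)) \<union> F = A"
    using \<open>F \<subseteq> A\<close> \<open>A \<subseteq> T\<close> by auto
qed

lemma johnson_adj_iff_not_complement:
  assumes "finite T" "F \<subseteq> T" "card T = card F + 4" "K = card F + 2"
    and "A \<in> ksets F T K" "B \<in> ksets F T K"
  shows "johnson_adj K A B \<longleftrightarrow> A \<noteq> B \<and> B \<noteq> (T - A) \<union> F"
proof -
  note complement = ksets_complement[OF assms(1,2,5)]
  have "finite B" "card B = K" "F \<subseteq> A \<inter> B" "B \<subseteq> T"
    using assms(5,6) finite_ksets_member(1)[OF assms(1,6)] by (auto simp: mem_ksets)
  have "card (A \<inter> B) = K \<longleftrightarrow> A = B"
  proof (cases "A = B")
    case True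
    then show ?thesis
      using assms(5) by (simp add: mem_ksets)
  next
    case False
    then show ?thesis
      using card_Int_ksets(2)[OF assms(1,5,6) False] by simp
  qed
  moreover have "card (A \<inter> B) = card F \<longleftrightarrow> B = (T - A) \<union> F"
  proof
    assume "card (A \<inter> B) = card F"
    then have "A \<inter> B = F"
      using card_subset_eq[OF _ \<open>F \<subseteq> A \<inter> B\<close>] \<open>finite B\<close> by auto
    then have "B \<subseteq> (T - A) \<union> F"
      using \<open>B \<subseteq> T\<close> by blast
    moreover have "finite ((T - A) \<union> F)" "card ((T - A) \<union> F) = K"
      using complement(1) finite_ksets_member(1)[OF assms(1) complement(1)] assms(3,4)
      by (simp_all add: mem_ksets)
    ultimately show "B = (T - A) \<union> F"
      using card_subset_eq \<open>card B = K\<close> by metis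
  qed (use complement in simp)
  moreover have "card F \<le> card (A \<inter> B)" "card (A \<inter> B) \<le> K"
    using \<open>F \<subseteq> A \<inter> B\<close> \<open>finite B\<close> \<open>card B = K\<close> card_mono[of B "A \<inter> B"] by (auto intro: card_mono)
  ultimately show ?thesis
    using assms(4) unfolding johnson_adj_def by linarith
qed

lemma paired_2_coverable_ksets_octahedron:
  assumes "finite T" "F \<subseteq> T" "card T = card F + 4" "K = card F + 2"
  shows "paired_2_coverable (ksets F T K) (johnson_adj K)"
proof (rule paired_2_coverable_octahedron[where \<sigma> = "\<lambda>A. (T - A) \<union> F"])
  have "card (T - F) = 4"
    using card_Diff_subset[OF finite_subset[OF assms(2,1)] assms(2)] assms(3) by simp
  then show "card (ksets F T K) = 6"
    using card_ksets[OF assms(1,2)] assms(4) by (simp add: numeral_eq_Suc)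
  show "(T - A) \<union> F \<in> ksets F T K \<and> (T - ((T - A) \<union> F)) \<union> F = A \<and> (T - A) \<union> F \<noteq> A"
    if "A \<in> ksets F T K" for A
    using ksets_complement[OF assms(1,2) that] that assms(3,4) by (auto simp: mem_ksets)
  show "johnson_adj K A B \<longleftrightarrow> A \<noteq> B \<and> B \<noteq> (T - A) \<union> F"
    if "A \<in> ksets F T K" "B \<in> ksets F T K" for A B
    using johnson_adj_iff_not_complement[OF assms that] .
qed

lemma ksets_exchange:
  assumes "finite T" "A \<in> ksets F T K" "s \<in> A" "s \<notin> F" "z \<in> T" "z \<notin> A"
  shows "insert z (A - {s}) \<in> ksets F T K" "johnson_adj K A (insert z (A - {s}))"
proof -
  have "finite A" "card A = K"
    using assms(1,2) finite_subset by (auto simp: mem_ksets)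
  moreover have "card A \<noteq> 0"
    using \<open>finite A\<close> assms(3) by auto
  ultimately have card: "card (A - {s}) + 1 = K"
    using card_Diff_singleton[OF assms(3)] by simp
  then have "card (insert z (A - {s})) = K"
    using \<open>finite A\<close> assms(6) by (simp add: card_insert_disjoint)
  then show "insert z (A - {s}) \<in> ksets F T K"
    using assms(2-5) by (auto simp: mem_ksets)
  have "A \<inter> insert z (A - {s}) = A - {s}"
    using assms(6) by auto
  then show "johnson_adj K A (insert z (A - {s}))"
    using card by (simp add: johnson_adj_def)
qed

lemma exchange_inverse: "s \<in> A \<Longrightarrow> z \<notin> A \<Longrightarrow> insert s (insert z (A - {s}) - {z}) = A"
  by auto

lemma ksets_exchange_in:
  assumes "finite T" "e \<in> T" "A \<in> ksets F (T - {e}) K" "t \<in> A" "t \<notin> F"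
  shows "insert e (A - {t}) \<in> ksets (insert e F) T K" "johnson_adj K A (insert e (A - {t}))"
proof -
  have "A \<in> ksets F T K" "e \<notin> A"
    using assms(3) by (auto simp: mem_ksets)
  then show "insert e (A - {t}) \<in> ksets (insert e F) T K" "johnson_adj K A (insert e (A - {t}))"
    using ksets_exchange[OF assms(1) _ assms(4,5,2)] by (simp_all add: mem_ksets_insert)
qed

lemma ksets_exchange_out:
  assumes "finite T" "e \<notin> F" "A \<in> ksets (insert e F) T K" "z \<in> T" "z \<notin> A"
  shows "insert z (A - {e}) \<in> ksets F (T - {e}) K" "johnson_adj K A (insert z (A - {e}))"
proof -
  have "A \<in> ksets F T K" "e \<in> A"
    using assms(3) by (auto simp: mem_ksets)
  then show "insert z (A - {e}) \<in> ksets F (T - {e}) K" "johnson_adj K A (insert z (A - {e}))"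
    using ksets_exchange[OF assms(1) _ _ assms(2,4,5)] assms(5) by (auto simp: mem_ksets)
qed

lemma ksets_two_up_neighbours:
  assumes "finite T" "e \<in> T" "b \<in> ksets F (T - {e}) K" "card F + 2 \<le> K"
  shows "\<exists>a a'. a \<in> ksets (insert e F) T K \<and> a' \<in> ksets (insert e F) T K \<and> a \<noteq> a' \<and>
    johnson_adj K b a \<and> johnson_adj K b a'"
proof -
  have "finite F" "e \<notin> b"
    using finite_ksets_member(2)[OF _ assms(3)] assms(1,3) by (auto simp: mem_ksets)
  then obtain t t' where t: "t \<in> b" "t' \<in> b" "t \<noteq> t'" "t \<notin> F" "t' \<notin> F"
    using obtain_two_outside[of F b] assms(3,4) by (auto simp: mem_ksets)
  moreover have "insert e (b - {t}) \<noteq> insert e (b - {t'})"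
    using t \<open>e \<notin> b\<close> by auto
  ultimately show ?thesis
    using ksets_exchange_in[OF assms(1-3)] by blast
qed

lemma ksets_two_down_neighbours:
  assumes "finite T" "e \<notin> F" "a \<in> ksets (insert e F) T K" "K + 2 \<le> card T"
  shows "\<exists>b b'. b \<in> ksets F (T - {e}) K \<and> b' \<in> ksets F (T - {e}) K \<and> b \<noteq> b' \<and>
    johnson_adj K a b \<and> johnson_adj K a b'"
proof -
  have "finite a" "e \<in> a"
    using finite_ksets_member(1)[OF assms(1,3)] assms(3) by (auto simp: mem_ksets)
  then obtain z z' where z: "z \<in> T" "z' \<in> T" "z \<noteq> z'" "z \<notin> a" "z' \<notin> a"
    using obtain_two_outside[of a T] assms(3,4) by (auto simp: mem_ksets)
  moreover have "insert z (a - {e}) \<noteq> insert z' (a - {e})"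
    using z by auto
  ultimately show ?thesis
    using ksets_exchange_out[OF assms(1-3)] by blast
qed

lemma ksets_edge_lift_up:
  assumes "finite T" "e \<in> T" "p \<in> ksets F (T - {e}) K" "p' \<in> ksets F (T - {e}) K"
    and "johnson_adj K p p'" "card F + 2 \<le> K"
  shows "\<exists>a a'. a \<in> ksets (insert e F) T K \<and> a' \<in> ksets (insert e F) T K \<and> a \<noteq> a' \<and>
    johnson_adj K p a \<and> johnson_adj K a' p'"
proof -
  have p: "e \<notin> p" "e \<notin> p'" "F \<subseteq> p \<inter> p'" "card p = K" "finite F"
    using assms(3,4) finite_ksets_member(2)[OF _ assms(3)] assms(1) by (auto simp: mem_ksets)
  have "card F < card (p \<inter> p')"
    using assms(5,6) by (simp add: johnson_adj_def)
  then obtain t where t: "t \<in> p" "t \<in> p'" "t \<notin> F"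
    using obtain_outside[OF p(5)] by blast
  note lift = ksets_exchange_in[OF assms(1,2,3) t(1,3)] ksets_exchange_in[OF assms(1,2,4) t(2,3)]
  have "p \<noteq> p'"
    using assms(5) p(4) johnson_adj_neq by auto
  then have "insert e (p - {t}) \<noteq> insert e (p' - {t})"
    using exchange_inverse[of t p e] exchange_inverse[of t p' e] t p(1,2) by force
  then show ?thesis
    using lift sympD[OF symp_johnson_adj lift(4)] by blast
qed

lemma ksets_edge_lift_down:
  assumes "finite T" "e \<notin> F" "p \<in> ksets (insert e F) T K" "p' \<in> ksets (insert e F) T K"
    and "johnson_adj K p p'" "K + 2 \<le> card T"
  shows "\<exists>b b'. b \<in> ksets F (T - {e}) K \<and> b' \<in> ksets F (T - {e}) K \<and> b \<noteq> b' \<and>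
    johnson_adj K p b \<and> johnson_adj K b' p'"
proof -
  have p: "e \<in> p" "e \<in> p'" "finite p" "finite p'" "card p = K" "card p' = K"
    using assms(3,4) finite_ksets_member(1)[OF assms(1)] by (auto simp: mem_ksets)
  moreover have "card p + card p' = card (p \<union> p') + card (p \<inter> p')"
    using p(3,4) by (rule card_Un_Int)
  ultimately have "card (p \<union> p') < card T"
    using assms(5,6) by (simp add: johnson_adj_def)
  then obtain z where z: "z \<in> T" "z \<notin> p" "z \<notin> p'"
    using obtain_outside[of "p \<union> p'" T] p(3,4) by blast
  note drop = ksets_exchange_out[OF assms(1,2,3) z(1,2)] ksets_exchange_out[OF assms(1,2,4) z(1,3)]
  have "p \<noteq> p'"
    using assms(5) p(5) johnson_adj_neq by auto
  then have "insert z (p - {e}) \<noteq> insert z (p' - {e})"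
    using exchange_inverse[of e p z] exchange_inverse[of e p' z] z p(1,2) by force
  then show ?thesis
    using drop sympD[OF symp_johnson_adj drop(4)] by blast
qed

theorem hamiltonian_connected_ksets:
  assumes "finite T" "F \<subseteq> T" "card F < K" "K < card T"
  shows "hamiltonian_connected (ksets F T K) (johnson_adj K)"
  using assms
proof (induction "card T - card F" arbitrary: T F rule: less_induct)
  case less
  show ?case
  proof (cases "K = Suc (card F) \<or> Suc K = card T")
    case True
    then show ?thesis
      using less.prems johnson_adj_ksets_complete
      by (intro hamiltonian_connected_complete finite_ksets) auto
  next
    case False
    show ?thesis
      unfolding hamiltonian_connected_def
    proof (intro ballI impI)
      fix u v assume uv: "u \<in> ksets F T K" "v \<in> ksets F T K" "u \<noteq> v"
      obtain e where e: "e \<in> T" "e \<notin> F" "e \<in> u" "e \<notin> v"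
        using ksets_obtain_separating[OF less.prems(1) uv] .
      have "finite F"
        using less.prems(1,2) finite_subset by blast
      then have card: "card (T - {e}) = card T - 1" "card (insert e F) = Suc (card F)"
        using less.prems(1) e by auto
      let ?V0 = "ksets F (T - {e}) K" and ?V1 = "ksets (insert e F) T K"
      have ham0: "hamiltonian_connected ?V0 (johnson_adj K)"
        by (rule less.hyps) (use less.prems e card False in auto)
      have ham1: "hamiltonian_connected ?V1 (johnson_adj K)"
        by (rule less.hyps) (use less.prems e card False in auto)
      have u1: "u \<in> ?V1" and v0: "v \<in> ?V0"
        using uv e by (auto simp: mem_ksets)
      have "card {u} < card ?V1"
        using card_ksets_ge[of T "insert e F" K] less.prems e card False by auto
      then obtain a where a: "a \<in> ?V1" "u \<noteq> a"
        using obtain_outside[of "{u}" ?V1] by auto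
      obtain b where b: "b \<in> ?V0" "johnson_adj K a b" "b \<noteq> v"
        using ksets_two_down_neighbours[OF less.prems(1) e(2) a(1)] less.prems False by auto
      show "\<exists>P. is_path (ksets F T K) (johnson_adj K) P u v \<and> set P = ksets F T K"
        using hamiltonian_path_across[OF ham0 ham1 ksets_split_disjoint u1 a b(2,1) v0 b(3)]
          ksets_split[OF e(1,2)] by simp
    qed
  qed
qed

lemma split_graph_ksets:
  assumes "finite T" "F \<subseteq> T" "e \<in> T" "e \<notin> F"
    and "card F + 2 \<le> K" "K + 2 \<le> card T" "card F + 5 \<le> card T"
    and "paired_2_coverable (ksets F (T - {e}) K) (johnson_adj K)"
    and "paired_2_coverable (ksets (insert e F) T K) (johnson_adj K)"
  shows "split_graph (johnson_adj K) (ksets F (T - {e}) K) (ksets (insert e F) T K)"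
proof
  have "finite F"
    using assms(1,2) finite_subset by blast
  then have card: "card (T - {e}) = card T - 1" "card (insert e F) = Suc (card F)"
    using assms(1,3,4) by auto
  have sub: "F \<subseteq> T - {e}" "insert e F \<subseteq> T"
    using assms(2-4) by auto
  have bounds: "card F < K" "K < card (T - {e})" "card (insert e F) < K" "K < card T"
    using assms(5,6) card by auto
  show "hamiltonian_connected (ksets F (T - {e}) K) (johnson_adj K)"
    using hamiltonian_connected_ksets[OF _ sub(1) bounds(1,2)] assms(1) by simp
  show "hamiltonian_connected (ksets (insert e F) T K) (johnson_adj K)"
    using hamiltonian_connected_ksets[OF assms(1) sub(2) bounds(3,4)] .
  show "4 \<le> card (ksets F (T - {e}) K)"
    using card_ksets_ge[OF _ sub(1) bounds(1,2)] assms(1,7) card by simp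
  show "4 \<le> card (ksets (insert e F) T K)"
    using card_ksets_ge[OF assms(1) sub(2) bounds(3,4)] assms(7) card by simp
  show "symp (johnson_adj K)"
    by (rule symp_johnson_adj)
  show "ksets F (T - {e}) K \<inter> ksets (insert e F) T K = {}"
    by (rule ksets_split_disjoint)
  show "paired_2_coverable (ksets F (T - {e}) K) (johnson_adj K)"
    "paired_2_coverable (ksets (insert e F) T K) (johnson_adj K)"
    by (fact assms(8), fact assms(9))
qed (use ksets_two_up_neighbours[OF assms(1,3) _ assms(5)] ksets_two_down_neighbours[OF assms(1,4) _ assms(6)]
      ksets_edge_lift_up[OF assms(1,3) _ _ _ assms(5)] ksets_edge_lift_down[OF assms(1,4) _ _ _ assms(6)]
    in blast)+

lemma ksets_obtain_exchange_point:
  assumes "finite T" "e \<notin> F"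
    and "u \<in> ksets (insert e F) T K" "x \<in> ksets (insert e F) T K" "u \<noteq> x"
    and "v \<in> ksets F (T - {e}) K" "y \<in> ksets F (T - {e}) K" "v \<noteq> y"
  obtains z where "z \<in> u \<union> x" "z \<notin> v \<inter> y" "z \<noteq> e" "z \<in> T" "z \<notin> F"
proof -
  have u: "u \<in> ksets F T K" "x \<in> ksets F T K"
    using assms(3,4) by (auto simp: mem_ksets_insert)
  have "finite u" "finite x" "finite (v \<inter> y)" "card u = K" "card x = K"
    using finite_ksets_member(1)[OF assms(1) u(1)] finite_ksets_member(1)[OF assms(1) u(2)]
      finite_ksets_member(1)[OF _ assms(6)] assms(1) u by (auto simp: mem_ksets)
  moreover have "card (u \<inter> x) < K" "card (v \<inter> y) < K"
    using card_Int_ksets(2)[OF assms(1) u assms(5)] card_Int_ksets(2)[OF _ assms(6-8)] assms(1) by auto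
  moreover have "card u + card x = card (u \<union> x) + card (u \<inter> x)"
    using calculation by (intro card_Un_Int)
  ultimately have "card (v \<inter> y) + 2 \<le> card (u \<union> x)"
    by linarith
  then obtain z1 z2 where "z1 \<in> u \<union> x" "z2 \<in> u \<union> x" "z1 \<noteq> z2" "z1 \<notin> v \<inter> y" "z2 \<notin> v \<inter> y"
    using obtain_two_outside[of "v \<inter> y" "u \<union> x"] \<open>finite (v \<inter> y)\<close> by blast
  then obtain z where z: "z \<in> u \<union> x" "z \<notin> v \<inter> y" "z \<noteq> e"
    by metis
  moreover have "z \<in> T" "z \<notin> F"
    using z(1,2) u assms(6,7) by (auto simp: mem_ksets)
  ultimately show thesis
    using that by blast
qed

(* With z as in ksets_obtain_exchange_point, A \<mapsto> A - e + z matches the sets containing e but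
   not z with those containing z but not e.  At most one of u, x (namely p) and at most one preimage
   of v, y (namely q) lies in its domain D, which has at least |T - F| - 2 \<ge> 4 elements, so two
   matching edges avoid all four terminals. *)
lemma ksets_disjoint_cross_edges:
  assumes "finite T" "F \<subseteq> T" "e \<in> T" "e \<notin> F"
    and "card F + 2 \<le> K" "K + 2 \<le> card T" "card F + 6 \<le> card T"
    and "u \<in> ksets (insert e F) T K" "x \<in> ksets (insert e F) T K" "u \<noteq> x"
    and "v \<in> ksets F (T - {e}) K" "y \<in> ksets F (T - {e}) K" "v \<noteq> y"
  obtains a a' b b'
  where "a \<in> ksets (insert e F) T K - {u, x}" "a' \<in> ksets (insert e F) T K - {u, x}" "a \<noteq> a'"
    "b \<in> ksets F (T - {e}) K - {v, y}" "b' \<in> ksets F (T - {e}) K - {v, y}" "b \<noteq> b'"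
    "johnson_adj K a b" "johnson_adj K a' b'"
proof -
  obtain z where z: "z \<in> u \<union> x" "z \<notin> v \<inter> y" "z \<noteq> e" "z \<in> T" "z \<notin> F"
    using ksets_obtain_exchange_point[OF assms(1,4,8-13)] .
  define D where "D = ksets (insert e F) (T - {z}) K"
  define M where "M A = insert z (A - {e})" for A
  have D: "A \<in> ksets (insert e F) T K" "z \<notin> A" if "A \<in> D" for A
    using that unfolding D_def by (auto simp: mem_ksets)
  have M: "M A \<in> ksets F (T - {e}) K" "johnson_adj K A (M A)" "insert e (M A - {z}) = A" "z \<in> M A"
    if "A \<in> D" for A
    using ksets_exchange_out[OF assms(1,4) D(1)[OF that] z(4) D(2)[OF that]] exchange_inverse[of e A z] D[OF that]
    unfolding M_def by (auto simp: mem_ksets)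
  define p where "p = (if z \<in> u then x else u)"
  define q where "q = (if z \<in> v then insert e (v - {z}) else insert e (y - {z}))"
  have "finite F"
    using assms(1,2) finite_subset by blast
  then have "card (T - {z}) - card (insert e F) \<le> card D"
    unfolding D_def using assms(1-6) z(3-5) by (intro card_ksets_ge) auto
  then have "card {p, q} + 2 \<le> card D"
    using assms(1,4,7) z(4) \<open>finite F\<close> card_length[of "[p, q]"] by auto
  then obtain a a' where a: "a \<in> D" "a' \<in> D" "a \<noteq> a'" "a \<notin> {p, q}" "a' \<notin> {p, q}"
    using obtain_two_outside[of "{p, q}" D] by blast
  have avoid: "A \<notin> {u, x} \<and> M A \<notin> {v, y}" if "A \<in> D" "A \<notin> {p, q}" for A
  proof -
    have "A \<noteq> u" "A \<noteq> x"
      using D(2)[OF that(1)] that(2) z(1) unfolding p_def by (auto split: if_splits)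
    moreover have "M A \<noteq> v" "M A \<noteq> y"
      using M(3,4)[OF that(1)] that(2) z(2) unfolding q_def by (auto split: if_splits)
    ultimately show ?thesis
      by simp
  qed
  have "M a \<noteq> M a'"
    using M(3)[OF a(1)] M(3)[OF a(2)] a(3) by metis
  then show thesis
    using that[of a a' "M a" "M a'"] D(1)[OF a(1)] D(1)[OF a(2)] M[OF a(1)] M[OF a(2)]
      avoid[OF a(1,4)] avoid[OF a(2,5)] a(3)
    by blast
qed

lemma paired_cover_ksets_crossing:
  assumes "finite T" "F \<subseteq> T" "e \<in> T" "e \<notin> F"
    and "card F + 2 \<le> K" "K + 2 \<le> card T" "card F + 6 \<le> card T"
    and "split_graph (johnson_adj K) (ksets F (T - {e}) K) (ksets (insert e F) T K)"
    and "u \<in> ksets F T K" "v \<in> ksets F T K" "x \<in> ksets F T K" "y \<in> ksets F T K"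
    and "distinct [u, v, x, y]" "e \<in> u" "e \<notin> v" "(e \<in> x) \<noteq> (e \<in> y)"
  shows "paired_cover (ksets F T K) (johnson_adj K) u v x y"
proof -
  interpret split_graph "johnson_adj K" "ksets F (T - {e}) K" "ksets (insert e F) T K"
    by fact
  have in1: "A \<in> ksets (insert e F) T K" if "A \<in> ksets F T K" "e \<in> A" for A
    using that by (simp add: mem_ksets_insert)
  have in0: "A \<in> ksets F (T - {e}) K" if "A \<in> ksets F T K" "e \<notin> A" for A
    using that by (auto simp: mem_ksets)
  have crossing: "paired_cover (ksets F T K) (johnson_adj K) u v x' y'"
    if xy: "x' \<in> ksets F T K" "y' \<in> ksets F T K" "u \<noteq> x'" "v \<noteq> y'" "e \<in> x'" "e \<notin> y'" for x' y'
  proof -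
    note terminals = in1[OF assms(9,14)] in0[OF assms(10,15)] in1[OF xy(1,5)] in0[OF xy(2,6)]
    obtain a a' b b' where "a \<in> ksets (insert e F) T K - {u, x'}" "a' \<in> ksets (insert e F) T K - {u, x'}"
      "a \<noteq> a'" "b \<in> ksets F (T - {e}) K - {v, y'}" "b' \<in> ksets F (T - {e}) K - {v, y'}" "b \<noteq> b'"
      "johnson_adj K a b" "johnson_adj K a' b'"
      using ksets_disjoint_cross_edges[OF assms(1-7) terminals(1,3) xy(3) terminals(2,4) xy(4)] .
    then show ?thesis
      using paired_cover_crossing[OF terminals xy(3,4)] ksets_split[OF assms(3,4)] by simp
  qed
  show ?thesis
  proof (cases "e \<in> x")
    case True
    then show ?thesis
      using crossing[of x y] assms(11-13,16) by simp
  next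
    case False
    then show ?thesis
      using crossing[of y x] assms(11-13,16) paired_cover_rev_second[OF symp_johnson_adj] by simp
  qed
qed

lemma paired_2_coverable_ksets_split:
  assumes "finite T" "F \<subseteq> T" "card F + 2 \<le> K" "K + 2 \<le> card T" "card F + 5 \<le> card T"
    and split: "\<And>e. e \<in> T \<Longrightarrow> e \<notin> F \<Longrightarrow>
      split_graph (johnson_adj K) (ksets F (T - {e}) K) (ksets (insert e F) T K)"
  shows "paired_2_coverable (ksets F T K) (johnson_adj K)"
proof (rule paired_2_coverableI)
  fix u v x y
  assume uvxy: "u \<in> ksets F T K" "v \<in> ksets F T K" "x \<in> ksets F T K" "y \<in> ksets F T K"
    "distinct [u, v, x, y]"
  show "paired_cover (ksets F T K) (johnson_adj K) u v x y"
  proof (cases "\<exists>e \<in> T - F. (e \<in> u) = (e \<in> v) \<or> (e \<in> x) = (e \<in> y)")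
    case True
    then obtain e where e: "e \<in> T" "e \<notin> F" "(e \<in> u) = (e \<in> v) \<or> (e \<in> x) = (e \<in> y)"
      by blast
    then have "paired_cover (ksets F (T - {e}) K \<union> ksets (insert e F) T K) (johnson_adj K) u v x y"
      using uvxy by (intro split_graph.paired_cover_noncrossing[OF split[OF e(1,2)]])
        (simp_all add: ksets_split[OF e(1,2), symmetric] mem_ksets_insert)
    then show ?thesis
      by (simp add: ksets_split[OF e(1,2)])
  next
    case False
    have "u \<noteq> v"
      using uvxy(5) by simp
    then obtain e where e: "e \<in> T" "e \<notin> F" "e \<in> u" "e \<notin> v"
      using ksets_obtain_separating[OF assms(1) uvxy(1,2)] by blast
    have "card T - card F = 2 * (K - card F)"
      using ksets_separated_card[OF assms(1) uvxy(1,2)] False by blast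
    then have "card F + 6 \<le> card T"
      using assms(3-5) by presburger
    then show ?thesis
      using paired_cover_ksets_crossing[OF assms(1,2) e(1,2) assms(3,4) _ split[OF e(1,2)] uvxy e(3,4)]
        False e(1,2) by blast
  qed
qed

theorem paired_2_coverable_ksets:
  assumes "finite T" "F \<subseteq> T" "card F < K" "K < card T" "card F + 4 \<le> card T"
  shows "paired_2_coverable (ksets F T K) (johnson_adj K)"
  using assms
proof (induction "card T - card F" arbitrary: T F rule: less_induct)
  case less
  consider (complete) "K = Suc (card F) \<or> Suc K = card T"
    | (octahedron) "card T = card F + 4" "K = card F + 2"
    | (split) "card F + 2 \<le> K" "K + 2 \<le> card T" "card F + 5 \<le> card T"
    using less.prems by linarith
  then show ?case
  proof cases
    case complete
    then show ?thesis
      using less.prems johnson_adj_ksets_complete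
      by (intro paired_2_coverable_complete finite_ksets) auto
  next
    case octahedron
    then show ?thesis
      using paired_2_coverable_ksets_octahedron less.prems by blast
  next
    case split
    have "finite F"
      using less.prems(1,2) finite_subset by blast
    have "split_graph (johnson_adj K) (ksets F (T - {e}) K) (ksets (insert e F) T K)"
      if e: "e \<in> T" "e \<notin> F" for e
    proof (rule split_graph_ksets[OF less.prems(1,2) e split])
      have card: "card (T - {e}) = card T - 1" "card (insert e F) = Suc (card F)"
        using less.prems(1) e \<open>finite F\<close> by auto
      show "paired_2_coverable (ksets F (T - {e}) K) (johnson_adj K)"
        by (rule less.hyps) (use less.prems e card split in auto)
      show "paired_2_coverable (ksets (insert e F) T K) (johnson_adj K)"
        by (rule less.hyps) (use less.prems e card split in auto)
    qed
    then show ?thesis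
      using paired_2_coverable_ksets_split[OF less.prems(1,2) split] by blast
  qed
qed

theorem theorem4:
  fixes n k :: nat
  assumes "n \<ge> 4" and "1 \<le> k" and "k < n"
  shows "paired_2_coverable (johnson_vertices n k) (johnson_adj k)"
proof -
  have "johnson_vertices n k = ksets {} {1..n} k"
    by (simp add: johnson_vertices_def ksets_def)
  moreover have "paired_2_coverable (ksets {} {1..n} k) (johnson_adj k)"
    using assms by (intro paired_2_coverable_ksets) auto
  ultimately show ?thesis
    by simp
qed

end
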